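(* Let $\sigma=10$, $r=27$, $\beta=8/3$, and for $0<d\le 20$ let $F:\mathbb{R}^2\to\mathbb{R}^2$ be the map \[ F(x,y)=\Bigl(\tfrac{\sigma}{d}\Bigl(x-\tfrac{\beta r x}{\beta+x^2}\Bigr)+2x-y,\; x\Bigr). \] Then for every $0<d\le 20$ the map $F$ has a homoclinic point and infinitely many periodic points.
   Context: The fixed points of $F$ are $(0,0)$ and $\pm(\sqrt{\beta(r-1)},\sqrt{\beta(r-1)})$. A homoclinic point is a point, different from $q$, lying in the intersection of the stable and unstable manifolds $W^s(q)\cap W^u(q)$ of a hyperbolic fixed point $q$ of $F$. Periodic orbits of $F$ of period $n$ correspond to steady states of a ring of $n$ Lorenz oscillators coupled diffusively with strength $d$ in the $x$ variable. *)

theory Defs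
  imports "HOL-Analysis.Analysis"
begin

definition lorenzF :: "real \<Rightarrow> real \<Rightarrow> real \<Rightarrow> real \<Rightarrow> real \<times> real \<Rightarrow> real \<times> real" where
  "lorenzF \<sigma> r \<beta> d = (\<lambda>(x, y). (\<sigma> / d * (x - \<beta> * r * x / (\<beta> + x^2)) + 2 * x - y, x))"

text \<open>Hyperbolic fixed point of a planar map: fixed, differentiable there, and the
  Jacobian (a b; c e) has no eigenvalue on the complex unit circle, i.e. its
  characteristic polynomial z^2 - tr z + det has no root of modulus 1.\<close>
definition hyperbolic_fixed_point :: "(real \<times> real \<Rightarrow> real \<times> real) \<Rightarrow> real \<times> real \<Rightarrow> bool" where
  "hyperbolic_fixed_point F q \<longleftrightarrow> F q = q \<and>
     (\<exists>F'. (F has_derivative F') (at q) \<and>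
        (let a = fst (F' (1, 0)); c = snd (F' (1, 0));
             b = fst (F' (0, 1)); e = snd (F' (0, 1))
         in \<forall>z::complex. cmod z = 1 \<longrightarrow>
              z^2 - complex_of_real (a + e) * z + complex_of_real (a * e - b * c) \<noteq> 0))"

definition stable_set :: "('a \<Rightarrow> 'a) \<Rightarrow> 'a::topological_space \<Rightarrow> 'a set" where
  "stable_set F q = {p. (\<lambda>n. (F ^^ n) p) \<longlonglongrightarrow> q}"

definition unstable_set :: "('a \<Rightarrow> 'a) \<Rightarrow> 'a::topological_space \<Rightarrow> 'a set" where
  "unstable_set F q = {p. \<exists>s::nat \<Rightarrow> 'a. s 0 = p \<and> (\<forall>n. F (s (Suc n)) = s n) \<and> s \<longlonglongrightarrow> q}"

definition homoclinic_point :: "(real \<times> real \<Rightarrow> real \<times> real) \<Rightarrow> real \<times> real \<Rightarrow> bool" where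
  "homoclinic_point F p \<longleftrightarrow>
     (\<exists>q. hyperbolic_fixed_point F q \<and> p \<noteq> q \<and> p \<in> stable_set F q \<and> p \<in> unstable_set F q)"

definition periodic_points :: "('a \<Rightarrow> 'a) \<Rightarrow> 'a set" where
  "periodic_points F = {p. \<exists>n>0. (F ^^ n) p = p}"

end

theory Submission
  imports Defs
begin

(* Write c = sigma/d.  Then F(x, y) = (h(x) - y, x) with h(x) = c (x - beta r x / (beta + x^2)) + 2x,
   so the orbits of F are the bi-infinite solutions of h(x_n) = x_(n-1) + x_(n+1).
   For c >= 1/2 the map h expands distances by a factor of at least 5/2 on I0 = [-4/5, 4/5] and
   on I1 = [5/2, B]; moreover h(I1) covers [-8/5, 8/5] and h(I0) covers [-(B + 4/5), B + 4/5].
   Hence, for every code in which two 1s never occur at distance 1 or 2, the map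
   x_n := h^-1(x_(n-1) + x_(n+1)), with the branch of h^-1 in I(code n), is a contraction with
   factor 4/5 on bounded sequences, and its fixed point is the unique solution following the code.
   The code with a single 1 gives an orbit homoclinic to the hyperbolic origin (the contraction
   preserves the decay 9 * 2^-|n|), and the codes with 1s exactly on N Z, N >= 3, give infinitely
   many distinct periodic orbits. *)

definition recurrence_map :: "(real \<Rightarrow> real) \<Rightarrow> real \<times> real \<Rightarrow> real \<times> real" where
  "recurrence_map h = (\<lambda>(x, y). (h x - y, x))"

definition solves_recurrence :: "(real \<Rightarrow> real) \<Rightarrow> (int \<Rightarrow> real) \<Rightarrow> bool" where
  "solves_recurrence h x \<longleftrightarrow> (\<forall>n. h (x n) = x (n - 1) + x (n + 1))"

lemma recurrence_map_apply [simp]: "recurrence_map h (x, y) = (h x - y, x)"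
  by (simp add: recurrence_map_def)

lemma recurrence_map_iterate:
  assumes "solves_recurrence h x"
  shows "(recurrence_map h ^^ k) (x j, x (j - 1)) = (x (j + int k), x (j + int k - 1))"
proof (induction k)
  case (Suc k)
  have "h (x (j + int k)) - x (j + int k - 1) = x (j + int k + 1)"
    using assms unfolding solves_recurrence_def by (metis add_diff_cancel_left')
  with Suc show ?case by (simp add: algebra_simps)
qed simp

lemma recurrence_map_periodic_point:
  assumes "solves_recurrence h x" and "0 < N" and "\<And>n. x (n + int N) = x n"
  shows "(x 0, x (-1)) \<in> periodic_points (recurrence_map h)"
proof -
  have "(recurrence_map h ^^ N) (x 0, x (0 - 1)) = (x 0, x (-1))"
    using recurrence_map_iterate[OF assms(1), of N 0] assms(3)[of 0] assms(3)[of "-1"]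
    by (simp add: add.commute)
  then show ?thesis
    using assms(2) unfolding periodic_points_def by auto
qed

lemma recurrence_map_stable_set:
  assumes "solves_recurrence h x" and lim: "(\<lambda>k. x (int k)) \<longlonglongrightarrow> a"
  shows "(x 0, x (-1)) \<in> stable_set (recurrence_map h) (a, a)"
proof -
  have "(\<lambda>k. x (int (Suc k) - 1)) \<longlonglongrightarrow> a"
    using lim by simp
  then have "(\<lambda>k. x (int k - 1)) \<longlonglongrightarrow> a"
    by (rule LIMSEQ_imp_Suc)
  then show ?thesis
    using tendsto_Pair[OF lim] recurrence_map_iterate[OF assms(1), of _ 0]
    unfolding stable_set_def by simp
qed

lemma recurrence_map_unstable_set:
  assumes sol: "solves_recurrence h x" and lim: "(\<lambda>k. x (- int k)) \<longlonglongrightarrow> a"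
  shows "(x 0, x (-1)) \<in> unstable_set (recurrence_map h) (a, a)"
proof -
  define s where "s k = (x (- int k), x (- int (Suc k)))" for k
  have "recurrence_map h (s (Suc k)) = s k" for k
  proof -
    have "- int (Suc k) - 1 = - int (Suc (Suc k))" and "- int (Suc k) + 1 = - int k"
      by simp_all
    then have "h (x (- int (Suc k))) = x (- int (Suc (Suc k))) + x (- int k)"
      using sol unfolding solves_recurrence_def by metis
    then show ?thesis
      by (simp add: s_def)
  qed
  moreover have "s \<longlonglongrightarrow> (a, a)"
    unfolding s_def using tendsto_Pair[OF lim LIMSEQ_Suc[OF lim]] .
  moreover have "s 0 = (x 0, x (-1))"
    by (simp add: s_def)
  ultimately show ?thesis
    unfolding unstable_set_def by blast
qed

lemma quadratic_no_unit_root: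
  fixes z :: complex
  assumes "2 < \<bar>t\<bar>" and "cmod z = 1"
  shows "z^2 - of_real t * z + 1 \<noteq> 0"
proof
  assume root: "z^2 - of_real t * z + 1 = 0"
  have "z * cnj z = 1"
    using assms(2) complex_norm_square[of z] by simp
  then have "z - of_real t + cnj z = (z^2 - of_real t * z + 1) * cnj z"
    by (simp add: algebra_simps power2_eq_square)
  then have "Re (z - of_real t + cnj z) = 0"
    using root by simp
  then have "t = 2 * Re z"
    by simp
  then show False
    using assms abs_Re_le_cmod[of z] by simp
qed

lemma recurrence_map_has_derivative:
  assumes "(h has_real_derivative t) (at a)"
  shows "(recurrence_map h has_derivative (\<lambda>(u, v). (t * u - v, u))) (at (a, b))"
proof -
  have "(h has_derivative (*) t) (at (fst (a, b)))"
    using assms by (simp add: has_field_derivative_def)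
  from has_derivative_compose[OF has_derivative_fst[OF has_derivative_ident] this]
  have "((\<lambda>p. h (fst p)) has_derivative (\<lambda>p. t * fst p)) (at (a, b))"
    by simp
  then have "((\<lambda>p. (h (fst p) - snd p, fst p)) has_derivative (\<lambda>p. (t * fst p - snd p, fst p)))
      (at (a, b))"
    by (intro derivative_intros)
  then show ?thesis
    by (simp add: recurrence_map_def case_prod_beta')
qed

lemma hyperbolic_fixed_point_recurrence_map:
  assumes "h a = 2 * a" and "(h has_real_derivative t) (at a)" and "2 < \<bar>t\<bar>"
  shows "hyperbolic_fixed_point (recurrence_map h) (a, a)"
proof -
  have "(recurrence_map h has_derivative (\<lambda>(u, v). (t * u - v, u))) (at (a, a))"
    using assms(2) by (rule recurrence_map_has_derivative)
  then show ?thesis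
    unfolding hyperbolic_fixed_point_def
    using assms(1) quadratic_no_unit_root[OF assms(3)]
    by (intro conjI exI[of _ "\<lambda>(u, v). (t * u - v, u)"]) (simp_all add: Let_def eq_neg_iff_add_eq_0)
qed

(* The library proves completeness of bounded continuous functions only on metric domains,
   and int carries just its order topology. *)
lemma complete_PiC_UNIV:
  fixes X :: "'a::topological_space \<Rightarrow> 'b::complete_space set"
  assumes "\<And>i. closed (X i)"
  shows "complete (PiC UNIV X)"
  unfolding complete_def
proof safe
  fix f :: "nat \<Rightarrow> 'a \<Rightarrow>\<^sub>C 'b"
  assume f: "\<forall>n. f n \<in> PiC UNIV X" and "Cauchy f"
  then obtain g where "uniform_limit UNIV f g sequentially"
    using uniformly_convergent_eq_cauchy[of "\<lambda>_. True" f]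
    unfolding Cauchy_def uniform_limit_sequentially_iff
    by (metis dist_fun_lt_imp_dist_val_lt)
  from uniform_limit_bcontfunE[OF this sequentially_bot]
  obtain l where lim: "f \<longlonglongrightarrow> l"
    by metis
  have "l x \<in> X x" for x
  proof (rule Lim_in_closed_set[OF assms _ sequentially_bot])
    show "\<forall>\<^sub>F n in sequentially. f n x \<in> X x"
      using f by (auto intro!: eventuallyI simp: mem_PiC_iff Pi_iff)
    show "(\<lambda>n. f n x) \<longlonglongrightarrow> l x"
      using tendsto_bcontfun_uniform_limit[OF lim] by (rule tendsto_uniform_limitI) simp
  qed
  with lim show "\<exists>l\<in>PiC UNIV X. f \<longlonglongrightarrow> l"
    by (auto simp: mem_PiC_iff)
qed

locale expanding_recurrence =
  fixes h :: "real \<Rightarrow> real" and A :: "int \<Rightarrow> real set" and \<kappa> B :: real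
  assumes factor_gt_2: "2 < \<kappa>"
    and A_closed: "\<And>n. closed (A n)"
    and A_nonempty: "\<And>n. A n \<noteq> {}"
    and A_bounded: "\<And>n y. y \<in> A n \<Longrightarrow> \<bar>y\<bar> \<le> B"
    and expanding: "\<And>n u v. u \<in> A n \<Longrightarrow> v \<in> A n \<Longrightarrow> \<kappa> * \<bar>u - v\<bar> \<le> \<bar>h u - h v\<bar>"
    and covering: "\<And>x n. (\<And>m. x m \<in> A m) \<Longrightarrow> \<exists>y\<in>A n. h y = x (n - 1) + x (n + 1)"
begin

definition preimage :: "(int \<Rightarrow> real) \<Rightarrow> int \<Rightarrow> real" where
  "preimage x n = (SOME y. y \<in> A n \<and> h y = x (n - 1) + x (n + 1))"

lemma preimage:
  assumes "\<And>m. x m \<in> A m"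
  shows "preimage x n \<in> A n" and "h (preimage x n) = x (n - 1) + x (n + 1)"
  using someI_ex[OF covering[OF assms, of n, unfolded Bex_def]] by (simp_all add: preimage_def)

lemma preimage_eq:
  assumes "\<And>m. x m \<in> A m" and "y \<in> A n" and "h y = x (n - 1) + x (n + 1)"
  shows "preimage x n = y"
  using expanding[of "preimage x n" n y] preimage[OF assms(1), of n] assms(2,3) factor_gt_2
  by (simp add: mult_le_0_iff)

lemma preimage_dist:
  assumes "\<And>m. x m \<in> A m" and "\<And>m. x' m \<in> A m"
  shows "\<kappa> * \<bar>preimage x n - preimage x' n\<bar> \<le>
           \<bar>x (n - 1) - x' (n - 1)\<bar> + \<bar>x (n + 1) - x' (n + 1)\<bar>"
proof -
  have "\<kappa> * \<bar>preimage x n - preimage x' n\<bar> \<le> \<bar>h (preimage x n) - h (preimage x' n)\<bar>"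
    using expanding preimage assms by blast
  also have "\<dots> = \<bar>(x (n - 1) - x' (n - 1)) + (x (n + 1) - x' (n + 1))\<bar>"
    using preimage assms by (simp add: algebra_simps)
  finally show ?thesis
    by linarith
qed

lemma solves_recurrence_iff_preimage:
  assumes "\<And>m. x m \<in> A m"
  shows "solves_recurrence h x \<longleftrightarrow> preimage x = x"
  using preimage[OF assms] preimage_eq[OF assms] assms
  unfolding solves_recurrence_def by (metis ext)

lemma Bcontfun_mem:
  assumes "\<And>n. x n \<in> A n"
  shows "Bcontfun x \<in> PiC UNIV A" and "apply_bcontfun (Bcontfun x) = x"
proof -
  have "x \<in> bcontfun"
    using A_bounded assms by (intro bcontfun_normI) auto
  then show "apply_bcontfun (Bcontfun x) = x"
    by (rule Bcontfun_inverse)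
  then show "Bcontfun x \<in> PiC UNIV A"
    using assms by (simp add: mem_PiC_iff)
qed

definition preimage_map :: "(int \<Rightarrow>\<^sub>C real) \<Rightarrow> int \<Rightarrow>\<^sub>C real" where
  "preimage_map f = Bcontfun (preimage (apply_bcontfun f))"

lemma preimage_map:
  assumes "f \<in> PiC UNIV A"
  shows "preimage_map f \<in> PiC UNIV A" and "apply_bcontfun (preimage_map f) = preimage f"
proof -
  have "preimage f n \<in> A n" for n
    using preimage assms by (simp add: mem_PiC_iff Pi_iff)
  then show "preimage_map f \<in> PiC UNIV A" and "apply_bcontfun (preimage_map f) = preimage f"
    using Bcontfun_mem unfolding preimage_map_def by blast+
qed

lemma preimage_map_contraction:
  assumes "f \<in> PiC UNIV A" and "f' \<in> PiC UNIV A"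
  shows "dist (preimage_map f) (preimage_map f') \<le> 2 / \<kappa> * dist f f'"
proof (rule dist_bound)
  fix n
  have "\<kappa> * \<bar>preimage f n - preimage f' n\<bar> \<le> 2 * dist f f'"
    using preimage_dist[of f f' n] assms dist_bounded[of f "n - 1" f'] dist_bounded[of f "n + 1" f']
    by (simp add: dist_real_def mem_PiC_iff Pi_iff)
  then show "dist (preimage_map f n) (preimage_map f' n) \<le> 2 / \<kappa> * dist f f'"
    using preimage_map assms factor_gt_2 by (simp add: dist_real_def field_simps)
qed

lemma unique_solution: "\<exists>!x. (\<forall>n. x n \<in> A n) \<and> solves_recurrence h x"
proof -
  have "PiC UNIV A \<noteq> {}"
    using Bcontfun_mem(1)[of "\<lambda>n. SOME y. y \<in> A n"] A_nonempty by (metis ex_in_conv someI_ex)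
  then have "\<exists>!f\<in>PiC UNIV A. preimage_map f = f"
    using A_closed factor_gt_2 preimage_map preimage_map_contraction
    by (intro Banach_fix[where c = "2 / \<kappa>"] complete_PiC_UNIV) auto
  then obtain f where f: "f \<in> PiC UNIV A" "preimage_map f = f"
    and f_unique: "\<And>f'. f' \<in> PiC UNIV A \<Longrightarrow> preimage_map f' = f' \<Longrightarrow> f' = f"
    by blast
  show ?thesis
  proof
    show "(\<forall>n. f n \<in> A n) \<and> solves_recurrence h f"
      using f preimage_map[of f] solves_recurrence_iff_preimage[of f] by (simp add: mem_PiC_iff Pi_iff)
  next
    fix x assume x: "(\<forall>n. x n \<in> A n) \<and> solves_recurrence h x"
    then have "preimage_map (Bcontfun x) = Bcontfun x"
      using Bcontfun_mem(2)[of x] solves_recurrence_iff_preimage[of x] by (simp add: preimage_map_def)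
    then show "x = apply_bcontfun f"
      using f_unique Bcontfun_mem[of x] x by metis
  qed
qed

end

definition lorenz_h :: "real \<Rightarrow> real \<Rightarrow> real" where
  "lorenz_h c x = c * (x - 72 * x / (8/3 + x^2)) + 2 * x"

lemma lorenzF_eq_recurrence_map: "lorenzF 10 27 (8/3) d = recurrence_map (lorenz_h (10 / d))"
  by (simp add: lorenzF_def recurrence_map_def lorenz_h_def fun_eq_iff)

lemma lorenz_h_0 [simp]: "lorenz_h c 0 = 0"
  by (simp add: lorenz_h_def)

lemma lorenz_h_minus: "lorenz_h c (- x) = - lorenz_h c x"
  by (simp add: lorenz_h_def field_simps)

lemma lorenz_denominator_pos: "0 < 8/3 + x^2" for x :: real
  by (simp add: add_pos_nonneg)

lemma continuous_on_lorenz_h: "continuous_on S (lorenz_h c)"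
  unfolding lorenz_h_def
  by (intro continuous_intros) (metis lorenz_denominator_pos less_irrefl)

lemma lorenz_h_has_real_derivative_0: "(lorenz_h c has_real_derivative 2 - 26 * c) (at 0)"
proof -
  have "(lorenz_h c has_real_derivative c * (1 - 72 * (8/3) / (8/3)^2) + 2) (at 0)"
    unfolding lorenz_h_def by (auto intro!: derivative_eq_intros simp: power2_eq_square)
  then show ?thesis
    by (simp add: power2_eq_square algebra_simps)
qed

lemma lorenz_h_diff:
  "lorenz_h c u - lorenz_h c v =
     (u - v) * (2 + c - 72 * c * (8/3 - u * v) / ((8/3 + u^2) * (8/3 + v^2)))"
proof -
  have "lorenz_h c u - lorenz_h c v =
      (u - v) * (2 + c) - 72 * c * (u / (8/3 + u^2) - v / (8/3 + v^2))"
    unfolding lorenz_h_def by (simp add: algebra_simps)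
  also have "u / (8/3 + u^2) - v / (8/3 + v^2) =
      (u - v) * (8/3 - u * v) / ((8/3 + u^2) * (8/3 + v^2))"
    using lorenz_denominator_pos[of u] lorenz_denominator_pos[of v]
    by (simp add: divide_simps) (simp add: algebra_simps power2_eq_square)
  finally show ?thesis
    by (simp add: right_diff_distrib ac_simps)
qed

lemma lorenz_h_expanding_of_factor:
  assumes "5/2 \<le> \<bar>2 + c - 72 * c * (8/3 - u * v) / ((8/3 + u^2) * (8/3 + v^2))\<bar>"
  shows "5/2 * \<bar>u - v\<bar> \<le> \<bar>lorenz_h c u - lorenz_h c v\<bar>"
  using mult_left_mono[OF assms abs_ge_zero[of "u - v"]]
  by (simp add: lorenz_h_diff abs_mult mult.commute)

lemma lorenz_h_expanding_inner:
  assumes c: "1/2 \<le> c" and u: "\<bar>u\<bar> \<le> 4/5" and v: "\<bar>v\<bar> \<le> 4/5"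
  shows "5/2 * \<bar>u - v\<bar> \<le> \<bar>lorenz_h c u - lorenz_h c v\<bar>"
proof (rule lorenz_h_expanding_of_factor)
  define R where "R = (8/3 - u * v) / ((8/3 + u^2) * (8/3 + v^2))"
  have "u^2 \<le> 16/25" and "v^2 \<le> 16/25"
    using abs_le_square_iff[of u "4/5"] abs_le_square_iff[of v "4/5"] u v
    by (simp_all add: power_divide)
  then have "(8/3 + u^2) * (8/3 + v^2) \<le> (248/75) * (248/75)"
    by (intro mult_mono) (simp_all add: add_nonneg_nonneg)
  moreover have "u * v \<le> 16/25"
    using mult_mono[OF u v] abs_mult[of u v] by (simp add: abs_le_iff)
  ultimately have "(152/75) / ((248/75) * (248/75)) \<le> R"
    unfolding R_def using lorenz_denominator_pos[of u] lorenz_denominator_pos[of v]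
    by (intro frac_le) auto
  then have "c * (1/6) \<le> c * R"
    using c by (intro mult_left_mono) auto
  moreover have "72 * c * (8/3 - u * v) / ((8/3 + u^2) * (8/3 + v^2)) = 72 * (c * R)"
    by (simp add: R_def)
  ultimately show "5/2 \<le> \<bar>2 + c - 72 * c * (8/3 - u * v) / ((8/3 + u^2) * (8/3 + v^2))\<bar>"
    using c by linarith
qed

lemma lorenz_h_expanding_outer:
  assumes c: "1/2 \<le> c" and u: "5/2 \<le> u" and v: "5/2 \<le> v"
  shows "5/2 * \<bar>u - v\<bar> \<le> \<bar>lorenz_h c u - lorenz_h c v\<bar>"
proof (rule lorenz_h_expanding_of_factor)
  have "5/2 * (5/2) \<le> u * v"
    using u v by (intro mult_mono) auto
  then have "(8/3 - u * v) / ((8/3 + u^2) * (8/3 + v^2)) \<le> 0"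
    using lorenz_denominator_pos[of u] lorenz_denominator_pos[of v]
    by (intro divide_nonpos_pos) auto
  then have "c * ((8/3 - u * v) / ((8/3 + u^2) * (8/3 + v^2))) \<le> 0"
    using c by (intro mult_nonneg_nonpos) auto
  then show "5/2 \<le> \<bar>2 + c - 72 * c * (8/3 - u * v) / ((8/3 + u^2) * (8/3 + v^2))\<bar>"
    using c by simp
qed

(* The outer interval must reach beyond the zero of x - 72 x / (8/3 + x^2) at x ~ 8.3 when c is
   large, but must stay short when c is near 1/2, where h(4/5) is only about -6.7. *)
definition lorenz_bound :: "real \<Rightarrow> real" where
  "lorenz_bound c = (if 7/10 \<le> c then 9 else 11/2)"

definition lorenz_interval :: "real \<Rightarrow> bool \<Rightarrow> real set" where
  "lorenz_interval c s = (if s then {5/2 .. lorenz_bound c} else {-4/5 .. 4/5})"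

lemma lorenz_bound_between: "11/2 \<le> lorenz_bound c" "lorenz_bound c \<le> 9"
  by (simp_all add: lorenz_bound_def)

lemma lorenz_h_lorenz_bound: "1/2 \<le> c \<Longrightarrow> 8/5 \<le> lorenz_h c (lorenz_bound c)"
  by (simp add: lorenz_bound_def lorenz_h_def power2_eq_square)

lemma lorenz_h_four_fifths: "1/2 \<le> c \<Longrightarrow> lorenz_h c (4/5) \<le> - (lorenz_bound c + 4/5)"
  by (simp add: lorenz_bound_def lorenz_h_def power2_eq_square)

lemma lorenz_h_five_halves: "1/2 \<le> c \<Longrightarrow> lorenz_h c (5/2) \<le> - 8/5"
  by (simp add: lorenz_h_def power2_eq_square)

lemma closed_lorenz_interval: "closed (lorenz_interval c s)"
  by (simp add: lorenz_interval_def)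

lemma lorenz_interval_abs_le: "y \<in> lorenz_interval c s \<Longrightarrow> \<bar>y\<bar> \<le> 9"
  using lorenz_bound_between[of c] by (auto simp: lorenz_interval_def split: if_splits)

lemma lorenz_h_expanding:
  assumes "1/2 \<le> c" and "u \<in> lorenz_interval c s" and "v \<in> lorenz_interval c s"
  shows "5/2 * \<bar>u - v\<bar> \<le> \<bar>lorenz_h c u - lorenz_h c v\<bar>"
  using assms lorenz_h_expanding_inner lorenz_h_expanding_outer
  by (auto simp: lorenz_interval_def split: if_splits)

lemma lorenz_h_onto_outer:
  assumes "1/2 \<le> c" and "\<bar>t\<bar> \<le> 8/5"
  shows "\<exists>y\<in>lorenz_interval c True. lorenz_h c y = t"
proof -
  have "\<exists>y. 5/2 \<le> y \<and> y \<le> lorenz_bound c \<and> lorenz_h c y = t"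
    using assms(2) lorenz_h_five_halves[OF assms(1)] lorenz_h_lorenz_bound[OF assms(1)]
      lorenz_bound_between[of c]
    by (intro IVT' continuous_on_lorenz_h) (auto simp: abs_le_iff)
  then show ?thesis
    by (auto simp: lorenz_interval_def)
qed

lemma lorenz_h_onto_inner:
  assumes "1/2 \<le> c" and "\<bar>t\<bar> \<le> lorenz_bound c + 4/5"
  shows "\<exists>y\<in>lorenz_interval c False. lorenz_h c y = t"
proof -
  have "\<exists>y. - (4/5) \<le> y \<and> y \<le> 4/5 \<and> lorenz_h c y = t"
    using assms(2) lorenz_h_four_fifths[OF assms(1)] lorenz_h_minus[of c "4/5"]
    by (intro IVT2' continuous_on_lorenz_h) (auto simp: abs_le_iff)
  then show ?thesis
    by (auto simp: lorenz_interval_def)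
qed

definition sparse_code :: "(int \<Rightarrow> bool) \<Rightarrow> bool" where
  "sparse_code \<sigma> \<longleftrightarrow> (\<forall>n. \<sigma> n \<longrightarrow> \<not> \<sigma> (n + 1) \<and> \<not> \<sigma> (n + 2))"

lemma lorenz_covering:
  assumes c: "1/2 \<le> c" and \<sigma>: "sparse_code \<sigma>" and x: "\<And>m. x m \<in> lorenz_interval c (\<sigma> m)"
  shows "\<exists>y\<in>lorenz_interval c (\<sigma> n). lorenz_h c y = x (n - 1) + x (n + 1)"
proof (cases "\<sigma> n")
  case True
  then have "\<not> \<sigma> (n - 1)" and "\<not> \<sigma> (n + 1)"
    using \<sigma> unfolding sparse_code_def by (metis diff_add_cancel)+
  then have "x (n - 1) \<in> {-4/5 .. 4/5}" and "x (n + 1) \<in> {-4/5 .. 4/5}"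
    using x[of "n - 1"] x[of "n + 1"] by (simp_all add: lorenz_interval_def)
  then have "\<bar>x (n - 1) + x (n + 1)\<bar> \<le> 8/5"
    by (simp only: atLeastAtMost_iff abs_le_iff) linarith
  then show ?thesis
    using lorenz_h_onto_outer[OF c] True by simp
next
  case False
  have "\<not> (\<sigma> (n - 1) \<and> \<sigma> (n + 1))"
    using \<sigma> unfolding sparse_code_def by (metis add.commute add_diff_cancel_left' diff_add_eq one_add_one)
  then have "\<bar>x (n - 1) + x (n + 1)\<bar> \<le> lorenz_bound c + 4/5"
    using x[of "n - 1"] x[of "n + 1"] lorenz_bound_between[of c]
    by (auto simp: lorenz_interval_def split: if_splits)
  then show ?thesis
    using lorenz_h_onto_inner[OF c] False by simp
qed

lemma lorenz_coded_solution:
  assumes c: "1/2 \<le> c" and \<sigma>: "sparse_code \<sigma>"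
  shows "\<exists>!x. (\<forall>n. x n \<in> lorenz_interval c (\<sigma> n)) \<and> solves_recurrence (lorenz_h c) x"
proof -
  interpret expanding_recurrence "lorenz_h c" "\<lambda>n. lorenz_interval c (\<sigma> n)" "5/2" 9
  proof
    show "lorenz_interval c (\<sigma> n) \<noteq> {}" for n
      using lorenz_bound_between[of c] by (auto simp: lorenz_interval_def)
    show "5/2 * \<bar>u - v\<bar> \<le> \<bar>lorenz_h c u - lorenz_h c v\<bar>"
      if "u \<in> lorenz_interval c (\<sigma> n)" and "v \<in> lorenz_interval c (\<sigma> n)" for n u v
      using lorenz_h_expanding[OF c that] .
    show "\<exists>y\<in>lorenz_interval c (\<sigma> n). lorenz_h c y = x (n - 1) + x (n + 1)"
      if "\<And>m. x m \<in> lorenz_interval c (\<sigma> m)" for x n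
      using lorenz_covering[OF c \<sigma> that] .
  qed (auto intro: closed_lorenz_interval lorenz_interval_abs_le)
  show ?thesis
    by (rule unique_solution)
qed

lemma hyperbolic_fixed_point_lorenz_origin:
  assumes "1/2 \<le> c"
  shows "hyperbolic_fixed_point (recurrence_map (lorenz_h c)) (0, 0)"
  using hyperbolic_fixed_point_recurrence_map[of "lorenz_h c" 0 "2 - 26 * c"]
    lorenz_h_has_real_derivative_0[of c] assms
  by simp

lemma half_power_abs_neighbours:
  fixes n :: int
  assumes "n \<noteq> 0"
  shows "(1/2::real) ^ nat \<bar>n - 1\<bar> + (1/2) ^ nat \<bar>n + 1\<bar> = 5/2 * (1/2) ^ nat \<bar>n\<bar>"
proof (cases n rule: int_cases3)
  case (pos m)
  then obtain k where "n = int (Suc k)"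
    using not0_implies_Suc by blast
  then have "nat \<bar>n - 1\<bar> = k" and "nat \<bar>n + 1\<bar> = Suc (Suc k)" and "nat \<bar>n\<bar> = Suc k"
    by simp_all
  then show ?thesis
    by simp
next
  case (neg m)
  then obtain k where "n = - int (Suc k)"
    using not0_implies_Suc by blast
  then have "nat \<bar>n - 1\<bar> = Suc (Suc k)" and "nat \<bar>n + 1\<bar> = k" and "nat \<bar>n\<bar> = Suc k"
    by simp_all
  then show ?thesis
    by simp
qed (use assms in simp)

(* The weight w n = 9 * 2^-|n| satisfies w (n - 1) + w (n + 1) = 5/2 * w n for n \<noteq> 0, exactly the
   expansion factor of lorenz_h, so the decay condition is preserved by the branch inverse. *)
definition homoclinic_window :: "real \<Rightarrow> int \<Rightarrow> real set" where
  "homoclinic_window c n =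
     lorenz_interval c (n = 0) \<inter> {- 9 * (1/2) ^ nat \<bar>n\<bar> .. 9 * (1/2) ^ nat \<bar>n\<bar>}"

lemma lorenz_covering_homoclinic_window:
  assumes c: "1/2 \<le> c" and x: "\<And>m. x m \<in> homoclinic_window c m"
  shows "\<exists>y\<in>homoclinic_window c n. lorenz_h c y = x (n - 1) + x (n + 1)"
proof -
  define w where "w n = 9 * (1/2::real) ^ nat \<bar>n\<bar>" for n :: int
  have "sparse_code (\<lambda>n. n = 0)"
    by (simp add: sparse_code_def)
  then obtain y where y: "y \<in> lorenz_interval c (n = 0)" "lorenz_h c y = x (n - 1) + x (n + 1)"
    using lorenz_covering[OF c, of _ x n] x by (auto simp: homoclinic_window_def)
  have x_le: "\<bar>x m\<bar> \<le> w m" for m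
    using x[of m] by (simp add: homoclinic_window_def w_def abs_le_iff)
  have "\<bar>y\<bar> \<le> w n"
  proof (cases "n = 0")
    case True
    then show ?thesis
      using lorenz_interval_abs_le[OF y(1)] by (simp add: w_def)
  next
    case False
    then have "5/2 * \<bar>y - 0\<bar> \<le> \<bar>lorenz_h c y - lorenz_h c 0\<bar>"
      using y(1) by (intro lorenz_h_expanding[OF c]) (auto simp: lorenz_interval_def)
    also have "\<dots> \<le> \<bar>x (n - 1)\<bar> + \<bar>x (n + 1)\<bar>"
      using y(2) abs_triangle_ineq by simp
    also have "\<dots> \<le> w (n - 1) + w (n + 1)"
      using x_le[of "n - 1"] x_le[of "n + 1"] by (rule add_mono)
    also have "\<dots> = 5/2 * w n"
      using half_power_abs_neighbours[OF False] by (simp add: w_def)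
    finally show ?thesis
      by simp
  qed
  with y show ?thesis
    by (auto simp: homoclinic_window_def w_def abs_le_iff)
qed

lemma lorenz_homoclinic_solution:
  assumes c: "1/2 \<le> c"
  shows "\<exists>x. solves_recurrence (lorenz_h c) x \<and> (\<forall>n. x n \<in> homoclinic_window c n)"
proof -
  interpret expanding_recurrence "lorenz_h c" "homoclinic_window c" "5/2" 9
  proof
    show "homoclinic_window c n \<noteq> {}" for n
    proof -
      have "(if n = 0 then 5/2 else 0) \<in> homoclinic_window c n"
        using lorenz_bound_between[of c] by (simp add: homoclinic_window_def lorenz_interval_def)
      then show ?thesis
        by blast
    qed
    show "closed (homoclinic_window c n)" for n
      unfolding homoclinic_window_def
      by (intro closed_Int closed_lorenz_interval closed_atLeastAtMost)
    show "\<bar>y\<bar> \<le> 9" if "y \<in> homoclinic_window c n" for n y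
      using that lorenz_interval_abs_le by (auto simp: homoclinic_window_def)
    show "5/2 * \<bar>u - v\<bar> \<le> \<bar>lorenz_h c u - lorenz_h c v\<bar>"
      if "u \<in> homoclinic_window c n" and "v \<in> homoclinic_window c n" for n u v
      using that by (intro lorenz_h_expanding[OF c]) (auto simp: homoclinic_window_def)
  qed (simp_all add: lorenz_covering_homoclinic_window[OF c])
  show ?thesis
    using unique_solution by blast
qed

lemma lorenz_homoclinic_point:
  assumes "1/2 \<le> c"
  shows "\<exists>p. homoclinic_point (recurrence_map (lorenz_h c)) p"
proof -
  obtain x where sol: "solves_recurrence (lorenz_h c) x"
    and window: "\<And>n. x n \<in> homoclinic_window c n"
    using lorenz_homoclinic_solution[OF assms] by blast
  have decay: "norm (x n) \<le> 9 * (1/2) ^ nat \<bar>n\<bar>" for n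
    using window[of n] by (simp add: homoclinic_window_def abs_le_iff)
  have geometric: "(\<lambda>k. 9 * (1/2::real) ^ k) \<longlonglongrightarrow> 0"
    by (intro tendsto_mult_right_zero LIMSEQ_power_zero) simp
  have "(\<lambda>k. x (int k)) \<longlonglongrightarrow> 0" and "(\<lambda>k. x (- int k)) \<longlonglongrightarrow> 0"
    using decay[of "int k" for k] decay[of "- int k" for k]
    by (auto intro!: Lim_null_comparison[OF always_eventually geometric])
  then have "(x 0, x (-1)) \<in> stable_set (recurrence_map (lorenz_h c)) (0, 0)"
    and "(x 0, x (-1)) \<in> unstable_set (recurrence_map (lorenz_h c)) (0, 0)"
    using sol by (auto intro: recurrence_map_stable_set recurrence_map_unstable_set)
  moreover have "(x 0, x (-1)) \<noteq> (0, 0)"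
    using window[of 0] by (auto simp: homoclinic_window_def lorenz_interval_def)
  ultimately show ?thesis
    using hyperbolic_fixed_point_lorenz_origin[OF assms] unfolding homoclinic_point_def by blast
qed

lemma sparse_code_dvd:
  assumes "3 \<le> N"
  shows "sparse_code (\<lambda>n. int N dvd n)"
  unfolding sparse_code_def
proof (intro allI impI conjI notI)
  fix n assume n: "int N dvd n"
  show False if "int N dvd n + 1"
    using zdvd_imp_le[of "int N" 1] dvd_add_right_iff[OF n, of 1] that assms by simp
  show False if "int N dvd n + 2"
    using zdvd_imp_le[of "int N" 2] dvd_add_right_iff[OF n, of 2] that assms by simp
qed

lemma lorenz_periodic_solution:
  assumes c: "1/2 \<le> c" and N: "3 \<le> N"
  shows "\<exists>x. solves_recurrence (lorenz_h c) x \<and> (\<forall>n. x n \<in> lorenz_interval c (int N dvd n))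
           \<and> (\<forall>n. x (n + int N) = x n)"
proof -
  obtain x where x: "\<forall>n. x n \<in> lorenz_interval c (int N dvd n)" "solves_recurrence (lorenz_h c) x"
    and unique: "\<And>x'. (\<forall>n. x' n \<in> lorenz_interval c (int N dvd n)) \<and>
                     solves_recurrence (lorenz_h c) x' \<Longrightarrow> x' = x"
    using lorenz_coded_solution[OF c sparse_code_dvd[OF N]] by blast
  have "(\<lambda>n. x (n + int N)) = x"
  proof (rule unique)
    have "lorenz_h c (x (n + int N)) = x (n - 1 + int N) + x (n + 1 + int N)" for n
      using x(2) unfolding solves_recurrence_def by (simp add: algebra_simps)
    moreover have "x (n + int N) \<in> lorenz_interval c (int N dvd n)" for n
      using x(1)[rule_format, of "n + int N"] by (simp add: dvd_add_triv_right_iff)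
    ultimately show "(\<forall>n. x (n + int N) \<in> lorenz_interval c (int N dvd n)) \<and>
        solves_recurrence (lorenz_h c) (\<lambda>n. x (n + int N))"
      unfolding solves_recurrence_def by simp
  qed
  with x show ?thesis
    by (metis (no_types))
qed

lemma lorenz_infinite_periodic_points:
  assumes c: "1/2 \<le> c"
  shows "infinite (periodic_points (recurrence_map (lorenz_h c)))"
proof -
  have "\<forall>N\<in>{3..}. \<exists>x. solves_recurrence (lorenz_h c) x \<and>
      (\<forall>n. x n \<in> lorenz_interval c (int N dvd n)) \<and> (\<forall>n. x (n + int N) = x n)"
    using lorenz_periodic_solution[OF c] by simp
  then obtain X where X: "\<forall>N\<in>{3..}. solves_recurrence (lorenz_h c) (X N) \<and>
      (\<forall>n. X N n \<in> lorenz_interval c (int N dvd n)) \<and> (\<forall>n. X N (n + int N) = X N n)"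
    by (metis bchoice)
  then have sol: "solves_recurrence (lorenz_h c) (X N)"
    and coded: "X N n \<in> lorenz_interval c (int N dvd n)"
    and periodic: "X N (n + int N) = X N n" if "3 \<le> N" for N n
    using that by auto
  define p where "p N = (X N 0, X N (-1))" for N
  have "p N \<in> periodic_points (recurrence_map (lorenz_h c))" if "3 \<le> N" for N
    unfolding p_def using sol periodic that by (intro recurrence_map_periodic_point[where N = N]) auto
  then have "p ` {3..} \<subseteq> periodic_points (recurrence_map (lorenz_h c))"
    by auto
  moreover have "inj_on p {3..}"
  proof (rule linorder_inj_onI')
    fix M N :: nat
    assume M: "M \<in> {3..}" and N: "N \<in> {3..}" and "M < N"
    have orbit: "fst ((recurrence_map (lorenz_h c) ^^ M) (p K)) = X K (int M)" if "3 \<le> K" for K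
      using recurrence_map_iterate[OF sol[OF that], of M 0] by (simp add: p_def)
    have "X M (int M) \<in> lorenz_interval c True"
      using coded[of M "int M"] M by simp
    moreover have "\<not> int N dvd int M"
      using M \<open>M < N\<close> by (auto dest: nat_dvd_not_less)
    then have "X N (int M) \<in> lorenz_interval c False"
      using coded[of N "int M"] N by simp
    ultimately show "p M \<noteq> p N"
      using orbit[of M] orbit[of N] M N by (auto simp: lorenz_interval_def)
  qed
  ultimately show ?thesis
    using infinite_Ici[of "3::nat"] by (metis finite_imageD infinite_super)
qed

theorem theorem4p3:
  fixes d :: real
  assumes "0 < d" and "d \<le> 20"
  shows "(\<exists>p. homoclinic_point (lorenzF 10 27 (8/3) d) p) \<and>
         infinite (periodic_points (lorenzF 10 27 (8/3) d))"
proof -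
  have "1/2 \<le> 10 / d"
    using assms by (simp add: field_simps)
  then show ?thesis
    unfolding lorenzF_eq_recurrence_map
    using lorenz_homoclinic_point lorenz_infinite_periodic_points by blast
qed

end
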